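(* Let $\mathcal{G}\rightrightarrows M$ be a Lie groupoid and let $\overline{(\mathcal{G},\mathcal{G})}$ be the closure in $\mathcal{G}$ of $(\mathcal{G},\mathcal{G})=\bigcup_{x\in M}(\mathcal{G}_x,\mathcal{G}_x)$. If $\overline{(\mathcal{G},\mathcal{G})}$ is a subgroupoid of $\mathcal{G}$, then it is a normal subgroupoid, i.e. $h\,g\,h^{-1}\in\overline{(\mathcal{G},\mathcal{G})}$ for all $g\in\overline{(\mathcal{G},\mathcal{G})}$ and $h\in\mathcal{G}$ with $s(h)=t(g)$.
   Context: $\mathcal{G}_x=s^{-1}(x)\cap t^{-1}(x)$ is the isotropy group at $x$ and $(\mathcal{G}_x,\mathcal{G}_x)$ its commutator subgroup. Lie groupoids need not have Hausdorff arrow space; $s,t$ are submersions. *)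

theory Defs
  imports "HOL-Analysis.Analysis"
begin

text \<open>A map on an open subset S of a Euclidean space is smooth (C-infinity) iff
  all iterated partial derivatives exist; equivalently there is a family of maps
  containing f, each Frechet differentiable on S, closed under taking partial
  derivatives along the standard basis vectors.\<close>

definition smooth_on :: "'a::euclidean_space set \<Rightarrow> ('a \<Rightarrow> 'b::real_normed_vector) \<Rightarrow> bool" where
  "smooth_on S f \<longleftrightarrow>
     (\<exists>F. f \<in> F \<and>
        (\<forall>g\<in>F. \<exists>g'. (\<forall>x\<in>S. (g has_derivative g' x) (at x)) \<and>
                     (\<forall>b\<in>Basis. (\<lambda>x. g' x b) \<in> F)))"

section \<open>Smooth manifolds (not necessarily Hausdorff) given by an atlas\<close>

type_synonym ('a, 'e) atlas = "('a set \<times> ('a \<Rightarrow> 'e)) set"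

definition is_chart :: "'a topology \<Rightarrow> 'a set \<Rightarrow> ('a \<Rightarrow> 'e::euclidean_space) \<Rightarrow> bool" where
  "is_chart X U \<phi> \<longleftrightarrow> openin X U \<and> open (\<phi> ` U) \<and>
      homeomorphic_map (subtopology X U) (top_of_set (\<phi> ` U)) \<phi>"

definition manifold :: "'a topology \<Rightarrow> ('a, 'e::euclidean_space) atlas \<Rightarrow> bool" where
  "manifold X A \<longleftrightarrow>
     (\<forall>(U,\<phi>)\<in>A. is_chart X U \<phi>) \<and>
     (\<forall>x\<in>topspace X. \<exists>(U,\<phi>)\<in>A. x \<in> U) \<and>
     (\<forall>(U,\<phi>)\<in>A. \<forall>(V,\<psi>)\<in>A. smooth_on (\<phi> ` (U \<inter> V)) (\<psi> \<circ> inv_into U \<phi>))"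

definition smooth_map ::
  "'a topology \<Rightarrow> ('a, 'e::euclidean_space) atlas \<Rightarrow>
   'b topology \<Rightarrow> ('b, 'f::euclidean_space) atlas \<Rightarrow> ('a \<Rightarrow> 'b) \<Rightarrow> bool" where
  "smooth_map X A Y B f \<longleftrightarrow> continuous_map X Y f \<and>
     (\<forall>(U,\<phi>)\<in>A. \<forall>(V,\<psi>)\<in>B. smooth_on (\<phi> ` (U \<inter> f -` V)) (\<psi> \<circ> f \<circ> inv_into U \<phi>))"

definition submersion ::
  "'a topology \<Rightarrow> ('a, 'e::euclidean_space) atlas \<Rightarrow>
   'b topology \<Rightarrow> ('b, 'f::euclidean_space) atlas \<Rightarrow> ('a \<Rightarrow> 'b) \<Rightarrow> bool" where
  "submersion X A Y B f \<longleftrightarrow> smooth_map X A Y B f \<and>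
     (\<forall>(U,\<phi>)\<in>A. \<forall>(V,\<psi>)\<in>B. \<forall>x\<in>U. f x \<in> V \<longrightarrow>
        (\<exists>D. ((\<psi> \<circ> f \<circ> inv_into U \<phi>) has_derivative D) (at (\<phi> x)) \<and> surj D))"

definition prod_atlas :: "('a, 'e) atlas \<Rightarrow> ('b, 'f) atlas \<Rightarrow> ('a \<times> 'b, 'e \<times> 'f) atlas" where
  "prod_atlas A B = {(U \<times> V, \<lambda>(a,b). (\<phi> a, \<psi> b)) | U \<phi> V \<psi>. (U,\<phi>) \<in> A \<and> (V,\<psi>) \<in> B}"

definition restrict_atlas :: "'a set \<Rightarrow> ('a, 'e) atlas \<Rightarrow> ('a, 'e) atlas" where
  "restrict_atlas W A = {(U \<inter> W, \<phi>) | U \<phi>. (U,\<phi>) \<in> A}"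

text \<open>Convention: the product mul g h (that is, g h) is defined iff s g = t h.\<close>

definition groupoid ::
  "'g set \<Rightarrow> 'm set \<Rightarrow> ('g \<Rightarrow> 'm) \<Rightarrow> ('g \<Rightarrow> 'm) \<Rightarrow> ('m \<Rightarrow> 'g) \<Rightarrow>
   ('g \<Rightarrow> 'g \<Rightarrow> 'g) \<Rightarrow> ('g \<Rightarrow> 'g) \<Rightarrow> bool" where
  "groupoid G M s t u mul iv \<longleftrightarrow>
     (\<forall>g\<in>G. s g \<in> M \<and> t g \<in> M) \<and>
     (\<forall>x\<in>M. u x \<in> G \<and> s (u x) = x \<and> t (u x) = x) \<and>
     (\<forall>g\<in>G. \<forall>h\<in>G. s g = t h \<longrightarrow>
        mul g h \<in> G \<and> s (mul g h) = s h \<and> t (mul g h) = t g) \<and>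
     (\<forall>f\<in>G. \<forall>g\<in>G. \<forall>h\<in>G. s f = t g \<longrightarrow> s g = t h \<longrightarrow>
        mul (mul f g) h = mul f (mul g h)) \<and>
     (\<forall>g\<in>G. mul (u (t g)) g = g \<and> mul g (u (s g)) = g) \<and>
     (\<forall>g\<in>G. iv g \<in> G \<and> s (iv g) = t g \<and> t (iv g) = s g \<and>
        mul g (iv g) = u (t g) \<and> mul (iv g) g = u (s g))"

text \<open>Smoothness of the multiplication on the embedded submanifold of composable pairs
  is expressed by local smooth extension to open subsets of G x G.\<close>

definition lie_groupoid ::
  "'g topology \<Rightarrow> ('g, 'e::euclidean_space) atlas \<Rightarrow>
   'm topology \<Rightarrow> ('m, 'f::euclidean_space) atlas \<Rightarrow>
   ('g \<Rightarrow> 'm) \<Rightarrow> ('g \<Rightarrow> 'm) \<Rightarrow> ('m \<Rightarrow> 'g) \<Rightarrow>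
   ('g \<Rightarrow> 'g \<Rightarrow> 'g) \<Rightarrow> ('g \<Rightarrow> 'g) \<Rightarrow> bool" where
  "lie_groupoid TG AG TM AM s t u mul iv \<longleftrightarrow>
     groupoid (topspace TG) (topspace TM) s t u mul iv \<and>
     manifold TG AG \<and> manifold TM AM \<and> Hausdorff_space TM \<and>
     submersion TG AG TM AM s \<and> submersion TG AG TM AM t \<and>
     smooth_map TM AM TG AG u \<and> smooth_map TG AG TG AG iv \<and>
     (\<forall>g\<in>topspace TG. \<forall>h\<in>topspace TG. s g = t h \<longrightarrow>
        (\<exists>W F. openin (prod_topology TG TG) W \<and> (g,h) \<in> W \<and>
           smooth_map (subtopology (prod_topology TG TG) W)
                      (restrict_atlas W (prod_atlas AG AG)) TG AG F \<and>
           (\<forall>(a,b)\<in>W. a \<in> topspace TG \<longrightarrow> b \<in> topspace TG \<longrightarrow> s a = t b \<longrightarrow>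
               F (a,b) = mul a b)))"

definition isotropy :: "'g set \<Rightarrow> ('g \<Rightarrow> 'm) \<Rightarrow> ('g \<Rightarrow> 'm) \<Rightarrow> 'm \<Rightarrow> 'g set" where
  "isotropy G s t x = {g \<in> G. s g = x \<and> t g = x}"

inductive_set commutator_subgroup ::
  "'g set \<Rightarrow> ('g \<Rightarrow> 'm) \<Rightarrow> ('g \<Rightarrow> 'm) \<Rightarrow> ('m \<Rightarrow> 'g) \<Rightarrow> ('g \<Rightarrow> 'g \<Rightarrow> 'g) \<Rightarrow> ('g \<Rightarrow> 'g) \<Rightarrow> 'm \<Rightarrow> 'g set"
  for G s t u mul iv x where
  unit: "u x \<in> commutator_subgroup G s t u mul iv x"
| comm: "a \<in> isotropy G s t x \<Longrightarrow> b \<in> isotropy G s t x \<Longrightarrow>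
          mul a (mul b (mul (iv a) (iv b))) \<in> commutator_subgroup G s t u mul iv x"
| prod: "a \<in> commutator_subgroup G s t u mul iv x \<Longrightarrow> b \<in> commutator_subgroup G s t u mul iv x \<Longrightarrow>
          mul a b \<in> commutator_subgroup G s t u mul iv x"
| inverse: "a \<in> commutator_subgroup G s t u mul iv x \<Longrightarrow> iv a \<in> commutator_subgroup G s t u mul iv x"

definition subgroupoid :: "'g set \<Rightarrow> ('g \<Rightarrow> 'm) \<Rightarrow> ('g \<Rightarrow> 'm) \<Rightarrow>
   ('g \<Rightarrow> 'g \<Rightarrow> 'g) \<Rightarrow> ('g \<Rightarrow> 'g) \<Rightarrow> 'g set \<Rightarrow> bool" where
  "subgroupoid G s t mul iv H \<longleftrightarrow> H \<subseteq> G \<and>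
     (\<forall>g\<in>H. \<forall>h\<in>H. s g = t h \<longrightarrow> mul g h \<in> H) \<and> (\<forall>g\<in>H. iv g \<in> H)"

end

theory Submission
  imports Defs
begin

text \<open>Let K be the union of the commutator subgroups of the isotropy groups. K consists of
  isotropy arrows and is invariant under conjugation by arrows; since the isotropy bundle
  \<open>{g. s g = t g}\<close> is closed (M is Hausdorff), so is its subset \<open>closure K\<close>. Given g in the closure
  and h with \<open>s h = t g\<close>, continuity of multiplication and inversion yields neighbourhoods H of h
  and P of g such that \<open>a k a\<inverse>\<close> lies in a prescribed neighbourhood of \<open>h g h\<inverse>\<close> whenever
  \<open>a \<in> H\<close>, \<open>k \<in> P\<close> and the product is defined. Because s is a submersion, \<open>s(H)\<close> is a
  neighbourhood of \<open>t g\<close>, so we may pick \<open>k \<in> K \<inter> P\<close> with \<open>t k \<in> s(H)\<close> and then \<open>a \<in> H\<close> with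
  \<open>s a = t k\<close>; the conjugate \<open>a k a\<inverse>\<close> is in K and in the neighbourhood.\<close>

locale groupoid_structure =
  fixes G :: "'g set" and M :: "'m set" and s t :: "'g \<Rightarrow> 'm" and u :: "'m \<Rightarrow> 'g"
    and mul :: "'g \<Rightarrow> 'g \<Rightarrow> 'g" and iv :: "'g \<Rightarrow> 'g"
  assumes groupoid: "groupoid G M s t u mul iv"
begin

lemma source_mem [simp]: "g \<in> G \<Longrightarrow> s g \<in> M"
  and target_mem [simp]: "g \<in> G \<Longrightarrow> t g \<in> M"
  using groupoid unfolding groupoid_def by auto

lemma unit_mem [simp]: "x \<in> M \<Longrightarrow> u x \<in> G"
  and source_unit [simp]: "x \<in> M \<Longrightarrow> s (u x) = x"
  and target_unit [simp]: "x \<in> M \<Longrightarrow> t (u x) = x"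
  using groupoid unfolding groupoid_def by auto

lemma mul_mem [simp]: "g \<in> G \<Longrightarrow> h \<in> G \<Longrightarrow> s g = t h \<Longrightarrow> mul g h \<in> G"
  and source_mul [simp]: "g \<in> G \<Longrightarrow> h \<in> G \<Longrightarrow> s g = t h \<Longrightarrow> s (mul g h) = s h"
  and target_mul [simp]: "g \<in> G \<Longrightarrow> h \<in> G \<Longrightarrow> s g = t h \<Longrightarrow> t (mul g h) = t g"
  using groupoid unfolding groupoid_def by auto

lemma mul_assoc [simp]:
  "f \<in> G \<Longrightarrow> g \<in> G \<Longrightarrow> h \<in> G \<Longrightarrow> s f = t g \<Longrightarrow> s g = t h \<Longrightarrow>
    mul (mul f g) h = mul f (mul g h)"
  using groupoid unfolding groupoid_def by auto

lemma inv_mem [simp]: "g \<in> G \<Longrightarrow> iv g \<in> G"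
  and source_inv [simp]: "g \<in> G \<Longrightarrow> s (iv g) = t g"
  and target_inv [simp]: "g \<in> G \<Longrightarrow> t (iv g) = s g"
  using groupoid unfolding groupoid_def by auto

lemma mul_unit_left [simp]: "g \<in> G \<Longrightarrow> x = t g \<Longrightarrow> mul (u x) g = g"
  and mul_unit_right [simp]: "g \<in> G \<Longrightarrow> x = s g \<Longrightarrow> mul g (u x) = g"
  using groupoid unfolding groupoid_def by auto

lemma mul_inv_right [simp]: "g \<in> G \<Longrightarrow> mul g (iv g) = u (t g)"
  and mul_inv_left [simp]: "g \<in> G \<Longrightarrow> mul (iv g) g = u (s g)"
  using groupoid unfolding groupoid_def by auto

lemma inv_mul_cancel_left [simp]: "a \<in> G \<Longrightarrow> g \<in> G \<Longrightarrow> s a = t g \<Longrightarrow> mul (iv a) (mul a g) = g"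
  by (metis mul_assoc inv_mem source_inv target_inv mul_inv_left mul_unit_left)

lemma mul_inv_cancel_left [simp]: "a \<in> G \<Longrightarrow> g \<in> G \<Longrightarrow> t a = t g \<Longrightarrow> mul a (mul (iv a) g) = g"
  by (metis mul_assoc inv_mem source_inv target_inv mul_inv_right mul_unit_left)

lemma inv_unique: "g \<in> G \<Longrightarrow> h \<in> G \<Longrightarrow> s g = t h \<Longrightarrow> mul g h = u (t g) \<Longrightarrow> h = iv g"
  by (metis inv_mem source_inv inv_mul_cancel_left mul_unit_right)

lemma commutator_subgroup_subset_isotropy:
  assumes "x \<in> M"
  shows "commutator_subgroup G s t u mul iv x \<subseteq> isotropy G s t x"
proof
  fix k assume "k \<in> commutator_subgroup G s t u mul iv x"
  then show "k \<in> isotropy G s t x"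
    using assms by (induction rule: commutator_subgroup.induct) (auto simp: isotropy_def)
qed

lemma conj_mem_isotropy:
  "a \<in> G \<Longrightarrow> p \<in> isotropy G s t (s a) \<Longrightarrow> mul a (mul p (iv a)) \<in> isotropy G s t (t a)"
  by (auto simp: isotropy_def)

lemma conj_mul:
  "a \<in> G \<Longrightarrow> p \<in> isotropy G s t (s a) \<Longrightarrow> q \<in> isotropy G s t (s a) \<Longrightarrow>
    mul a (mul (mul p q) (iv a)) = mul (mul a (mul p (iv a))) (mul a (mul q (iv a)))"
  by (auto simp: isotropy_def)

lemma conj_inv:
  "a \<in> G \<Longrightarrow> p \<in> isotropy G s t (s a) \<Longrightarrow> mul a (mul (iv p) (iv a)) = iv (mul a (mul p (iv a)))"
  by (rule inv_unique) (auto simp: isotropy_def)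

lemma conj_mem_commutator_subgroup:
  assumes "a \<in> G" and "k \<in> commutator_subgroup G s t u mul iv (s a)"
  shows "mul a (mul k (iv a)) \<in> commutator_subgroup G s t u mul iv (t a)"
proof -
  have "k \<in> commutator_subgroup G s t u mul iv x \<Longrightarrow> x = s a \<Longrightarrow>
      mul a (mul k (iv a)) \<in> commutator_subgroup G s t u mul iv (t a)" for x
  proof (induction rule: commutator_subgroup.induct)
    case unit
    then show ?case using \<open>a \<in> G\<close> by (simp add: commutator_subgroup.unit)
  next
    case (comm p q)
    let ?c = "\<lambda>g. mul a (mul g (iv a))"
    have "?c (mul p (mul q (mul (iv p) (iv q)))) =
        mul (?c p) (mul (?c q) (mul (iv (?c p)) (iv (?c q))))"
      using comm \<open>a \<in> G\<close>
      by (simp add: conj_mul[symmetric] conj_inv[symmetric] isotropy_def del: mul_assoc)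
    then show ?case
      using comm \<open>a \<in> G\<close> by (metis commutator_subgroup.comm conj_mem_isotropy)
  next
    case (prod p q)
    have "p \<in> isotropy G s t (s a)" "q \<in> isotropy G s t (s a)"
      using prod commutator_subgroup_subset_isotropy[of "s a"] \<open>a \<in> G\<close> by auto
    then show ?case
      using prod \<open>a \<in> G\<close> by (simp add: conj_mul commutator_subgroup.prod del: mul_assoc)
  next
    case (inverse p)
    have "p \<in> isotropy G s t (s a)"
      using inverse commutator_subgroup_subset_isotropy[of "s a"] \<open>a \<in> G\<close> by auto
    then show ?case
      using inverse \<open>a \<in> G\<close> by (metis conj_inv commutator_subgroup.inverse)
  qed
  then show ?thesis using assms(2) by blast
qed

lemma Union_commutator_subgroup_subset_isotropy_bundle:
  "(\<Union>x\<in>M. commutator_subgroup G s t u mul iv x) \<subseteq> {k \<in> G. s k = t k}"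
proof
  fix k assume "k \<in> (\<Union>x\<in>M. commutator_subgroup G s t u mul iv x)"
  then obtain x where x: "x \<in> M" "k \<in> commutator_subgroup G s t u mul iv x"
    by (rule UN_E)
  have "k \<in> isotropy G s t x"
    using commutator_subgroup_subset_isotropy[OF x(1)] x(2) by (rule subsetD)
  then show "k \<in> {k \<in> G. s k = t k}" unfolding isotropy_def by simp
qed

lemma conj_mem_Union_commutator_subgroup:
  assumes k: "k \<in> (\<Union>x\<in>M. commutator_subgroup G s t u mul iv x)"
    and a: "a \<in> G" "s a = t k"
  shows "mul a (mul k (iv a)) \<in> (\<Union>x\<in>M. commutator_subgroup G s t u mul iv x)"
proof -
  obtain x where x: "x \<in> M" "k \<in> commutator_subgroup G s t u mul iv x"
    using k by (rule UN_E)
  have "k \<in> isotropy G s t x"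
    using commutator_subgroup_subset_isotropy[OF x(1)] x(2) by (rule subsetD)
  then have "x = s a" using a(2) unfolding isotropy_def by simp
  then have "mul a (mul k (iv a)) \<in> commutator_subgroup G s t u mul iv (t a)"
    using conj_mem_commutator_subgroup a(1) x(2) by simp
  then show ?thesis using a(1) by (intro UN_I[of "t a"]) simp_all
qed

end

lemma is_chart_inj_on: "is_chart X U \<phi> \<Longrightarrow> inj_on \<phi> U"
  unfolding is_chart_def
  by (metis homeomorphic_imp_injective_map openin_subset topspace_subtopology_subset)

lemma is_chart_continuous_map:
  "is_chart X U \<phi> \<Longrightarrow> continuous_map (subtopology X U) euclidean \<phi>"
  unfolding is_chart_def
  using homeomorphic_imp_continuous_map continuous_map_in_subtopology by blast

lemma is_chart_open_image:
  assumes "is_chart X U \<phi>" and "openin X W" and "W \<subseteq> U"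
  shows "open (\<phi> ` W)"
proof -
  have hom: "homeomorphic_map (subtopology X U) (top_of_set (\<phi> ` U)) \<phi>"
    and "open (\<phi> ` U)"
    using assms(1) unfolding is_chart_def by auto
  have "openin (subtopology X U) W"
    using assms(2,3) unfolding openin_subtopology by blast
  then have "openin (top_of_set (\<phi> ` U)) (\<phi> ` W)"
    using homeomorphic_map_openness_eq[OF hom] by blast
  then show ?thesis using \<open>open (\<phi> ` U)\<close> openin_open_trans by blast
qed

lemma smooth_on_imp_continuous_on: "smooth_on S f \<Longrightarrow> continuous_on S f"
  unfolding smooth_on_def
  by (meson continuous_at_imp_continuous_on has_derivative_continuous)

lemma smooth_map_coordinates:
  assumes "smooth_map X A Y B f" and "(U,\<phi>) \<in> A" and "(V,\<psi>) \<in> B"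
  shows "smooth_on (\<phi> ` (U \<inter> f -` V)) (\<psi> \<circ> f \<circ> inv_into U \<phi>)"
  using assms unfolding smooth_map_def by fast

lemma submersion_coordinates_surj_derivative:
  assumes "submersion X A Y B f" and "(U,\<phi>) \<in> A" and "(V,\<psi>) \<in> B" and "x \<in> U" and "f x \<in> V"
  obtains D where "((\<psi> \<circ> f \<circ> inv_into U \<phi>) has_derivative D) (at (\<phi> x))" and "surj D"
  using assms unfolding submersion_def by fast

lemma surj_derivative_imp_interior_image:
  fixes f :: "'a::euclidean_space \<Rightarrow> 'b::euclidean_space"
  assumes "open S" and "continuous_on S f" and "x \<in> S"
    and "(f has_derivative D) (at x)" and "surj D"
  shows "f x \<in> interior (f ` S)"
proof -
  have "linear D" using assms(4) has_derivative_linear by blast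
  then obtain D' where "linear D'" and "D \<circ> D' = id"
    using assms(5) linear_surjective_right_inverse by blast
  then show ?thesis
    using sussmann_open_mapping[OF assms(1-4) _ _ order_refl] assms(1,3)
    by (simp add: interior_open linear_conv_bounded_linear)
qed

lemma submersion_locally_open:
  fixes A :: "('a, 'e::euclidean_space) atlas" and B :: "('b, 'f::euclidean_space) atlas"
  assumes "manifold X A" and "manifold Y B" and sub: "submersion X A Y B f"
    and "openin X H" and "h \<in> H"
  shows "\<exists>V. openin Y V \<and> f h \<in> V \<and> V \<subseteq> f ` H"
proof -
  have hX: "h \<in> topspace X" using assms(4,5) openin_subset by blast
  have contf: "continuous_map X Y f" using sub unfolding submersion_def smooth_map_def by auto
  then have fhY: "f h \<in> topspace Y" using hX continuous_map_image_subset_topspace by blast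
  obtain U \<phi> where U: "(U,\<phi>) \<in> A" "h \<in> U" and chartU: "is_chart X U \<phi>"
    using assms(1) hX unfolding manifold_def by fast
  obtain V' \<psi> where V': "(V',\<psi>) \<in> B" "f h \<in> V'" and chartV': "is_chart Y V' \<psi>"
    using assms(2) fhY unfolding manifold_def by fast
  define W where "W = U \<inter> H \<inter> {x \<in> topspace X. f x \<in> V'}"
  define g where "g = \<psi> \<circ> f \<circ> inv_into U \<phi>"
  have "openin X W" unfolding W_def
    using chartU chartV' assms(4) contf unfolding is_chart_def
    by (intro openin_Int openin_continuous_map_preimage) auto
  then have "open (\<phi> ` W)" using is_chart_open_image[OF chartU] W_def by blast
  moreover have "continuous_on (\<phi> ` W) g"
    using smooth_on_imp_continuous_on[OF smooth_map_coordinates[OF _ U(1) V'(1)]] sub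
    unfolding g_def submersion_def W_def by (blast intro: continuous_on_subset)
  moreover obtain D where "(g has_derivative D) (at (\<phi> h))" "surj D"
    using submersion_coordinates_surj_derivative[OF sub U(1) V'(1) U(2) V'(2)] unfolding g_def by blast
  ultimately have "g (\<phi> h) \<in> interior (g ` \<phi> ` W)"
    using surj_derivative_imp_interior_image U V' assms(5) hX unfolding W_def by blast
  moreover have g_coord: "g (\<phi> w) = \<psi> (f w)" if "w \<in> U" for w
    using is_chart_inj_on[OF chartU] that unfolding g_def by simp
  ultimately have "\<psi> (f h) \<in> interior (g ` \<phi> ` W)" using U(2) by simp
  define V where "V = {y \<in> topspace (subtopology Y V'). \<psi> y \<in> interior (g ` \<phi> ` W)}"
  have "openin (subtopology Y V') V" unfolding V_def
    using is_chart_continuous_map[OF chartV'] by (intro openin_continuous_map_preimage) auto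
  then have "openin Y V" using chartV' openin_trans_full unfolding is_chart_def by blast
  moreover have "V \<subseteq> f ` H"
  proof
    fix y assume y: "y \<in> V"
    then obtain w where w: "w \<in> W" "\<psi> y = \<psi> (f w)"
      using interior_subset g_coord unfolding V_def W_def by fastforce
    then have "y = f w"
      using y is_chart_inj_on[OF chartV'] unfolding V_def W_def by (auto dest: inj_onD)
    then show "y \<in> f ` H" using w unfolding W_def by blast
  qed
  moreover have "f h \<in> V" unfolding V_def using \<open>\<psi> (f h) \<in> _\<close> V' fhY by auto
  ultimately show ?thesis by blast
qed

lemma lie_groupoid_continuous_maps:
  assumes "lie_groupoid TG AG TM AM s t u mul iv"
  shows "continuous_map TG TM s" and "continuous_map TG TM t" and "continuous_map TG TG iv"
  using assms unfolding lie_groupoid_def submersion_def smooth_map_def by auto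

lemma lie_groupoid_imp_groupoid_structure:
  "lie_groupoid TG AG TM AM s t u mul iv \<Longrightarrow> groupoid_structure (topspace TG) (topspace TM) s t u mul iv"
  unfolding lie_groupoid_def by unfold_locales blast

lemma lie_groupoid_source_locally_open:
  assumes "lie_groupoid TG AG TM AM s t u mul iv" and "openin TG H" and "h \<in> H"
  shows "\<exists>V. openin TM V \<and> s h \<in> V \<and> V \<subseteq> s ` H"
proof -
  have "manifold TG AG" "manifold TM AM" "submersion TG AG TM AM s"
    using assms(1) unfolding lie_groupoid_def by auto
  from submersion_locally_open[OF this assms(2,3)] show ?thesis .
qed

lemma lie_groupoid_closedin_isotropy_bundle:
  assumes "lie_groupoid TG AG TM AM s t u mul iv"
  shows "closedin TG {g \<in> topspace TG. s g = t g}"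
proof -
  have "Hausdorff_space TM" using assms unfolding lie_groupoid_def by blast
  then show ?thesis
    using closedin_continuous_maps_eq lie_groupoid_continuous_maps[OF assms] by blast
qed

lemma lie_groupoid_mul_local_extension:
  assumes "lie_groupoid TG AG TM AM s t u mul iv"
    and "g \<in> topspace TG" "h \<in> topspace TG" "s g = t h"
  obtains W F where "openin (prod_topology TG TG) W" "(g,h) \<in> W"
    and "smooth_map (subtopology (prod_topology TG TG) W) (restrict_atlas W (prod_atlas AG AG)) TG AG F"
    and "\<forall>(a,b)\<in>W. a \<in> topspace TG \<longrightarrow> b \<in> topspace TG \<longrightarrow> s a = t b \<longrightarrow> F (a,b) = mul a b"
  using assms unfolding lie_groupoid_def by (elim conjE) (meson that)

lemma lie_groupoid_mul_continuous_at:
  assumes L: "lie_groupoid TG AG TM AM s t u mul iv"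
    and "p \<in> topspace TG" "q \<in> topspace TG" "s p = t q"
    and "openin TG N" "mul p q \<in> N"
  shows "\<exists>P Q. openin TG P \<and> openin TG Q \<and> p \<in> P \<and> q \<in> Q \<and>
     (\<forall>a\<in>P. \<forall>b\<in>Q. s a = t b \<longrightarrow> mul a b \<in> N)"
proof -
  obtain W F where W: "openin (prod_topology TG TG) W" "(p,q) \<in> W"
    and "smooth_map (subtopology (prod_topology TG TG) W) (restrict_atlas W (prod_atlas AG AG)) TG AG F"
    and F_mul: "\<forall>(a,b)\<in>W. a \<in> topspace TG \<longrightarrow> b \<in> topspace TG \<longrightarrow> s a = t b \<longrightarrow> F (a,b) = mul a b"
    using lie_groupoid_mul_local_extension[OF L assms(2-4)] by blast
  define Z where "Z = {z \<in> W. F z \<in> N}"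
  have "continuous_map (subtopology (prod_topology TG TG) W) TG F"
    using \<open>smooth_map _ _ TG AG F\<close> unfolding smooth_map_def by blast
  then have "openin (subtopology (prod_topology TG TG) W)
      {z \<in> topspace (subtopology (prod_topology TG TG) W). F z \<in> N}"
    using assms(5) by (rule openin_continuous_map_preimage)
  moreover have "topspace (subtopology (prod_topology TG TG) W) = W"
    using openin_subset[OF W(1)] by auto
  ultimately have "openin (prod_topology TG TG) Z"
    unfolding Z_def using W(1) openin_trans_full by metis
  moreover have "(p,q) \<in> Z" unfolding Z_def using W(2) F_mul assms(2-4,6) by auto
  ultimately obtain P Q where PQ: "openin TG P" "openin TG Q" "p \<in> P" "q \<in> Q" "P \<times> Q \<subseteq> Z"
    unfolding openin_prod_topology_alt by meson
  have "mul a b \<in> N" if "a \<in> P" "b \<in> Q" "s a = t b" for a b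
  proof -
    have "a \<in> topspace TG" "b \<in> topspace TG" using that PQ(1,2) openin_subset by blast+
    moreover have "(a,b) \<in> W" "F (a,b) \<in> N" using that PQ(5) unfolding Z_def by blast+
    ultimately show ?thesis using F_mul that(3) by auto
  qed
  then show ?thesis using PQ(1-4) by blast
qed

lemma lie_groupoid_conj_continuous_at:
  assumes L: "lie_groupoid TG AG TM AM s t u mul iv"
    and h: "h \<in> topspace TG" and g: "g \<in> topspace TG" "s h = t g" "s g = t g"
    and "openin TG N" "mul h (mul g (iv h)) \<in> N"
  shows "\<exists>H P. openin TG H \<and> openin TG P \<and> h \<in> H \<and> g \<in> P \<and>
     (\<forall>a\<in>H. \<forall>k\<in>P. s a = t k \<longrightarrow> s k = t k \<longrightarrow> mul a (mul k (iv a)) \<in> N)"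
proof -
  interpret groupoid_structure "topspace TG" "topspace TM" s t u mul iv
    using L by (rule lie_groupoid_imp_groupoid_structure)
  obtain P1 Q1 where PQ1: "openin TG P1" "openin TG Q1" "h \<in> P1" "mul g (iv h) \<in> Q1"
    and mul_PQ1: "\<forall>a\<in>P1. \<forall>b\<in>Q1. s a = t b \<longrightarrow> mul a b \<in> N"
    using lie_groupoid_mul_continuous_at[OF L, of h "mul g (iv h)" N] h g assms(6,7) by auto
  obtain P Q2 where PQ2: "openin TG P" "openin TG Q2" "g \<in> P" "iv h \<in> Q2"
    and mul_PQ2: "\<forall>a\<in>P. \<forall>b\<in>Q2. s a = t b \<longrightarrow> mul a b \<in> Q1"
    using lie_groupoid_mul_continuous_at[OF L, of g "iv h" Q1] h g PQ1(2,4) by auto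
  define H where "H = P1 \<inter> {a \<in> topspace TG. iv a \<in> Q2}"
  have "openin TG H"
    unfolding H_def using PQ1(1) PQ2(2) lie_groupoid_continuous_maps(3)[OF L]
    by (intro openin_Int openin_continuous_map_preimage)
  moreover have "h \<in> H" unfolding H_def using PQ1(3) PQ2(4) h by simp
  moreover have "\<forall>a\<in>H. \<forall>k\<in>P. s a = t k \<longrightarrow> s k = t k \<longrightarrow> mul a (mul k (iv a)) \<in> N"
  proof (intro ballI impI)
    fix a k assume ak: "a \<in> H" "k \<in> P" "s a = t k" "s k = t k"
    have "a \<in> topspace TG" "k \<in> topspace TG"
      using ak(1,2) PQ2(1) openin_subset unfolding H_def by blast+
    then have "mul k (iv a) \<in> Q1" using mul_PQ2 ak H_def by simp
    then show "mul a (mul k (iv a)) \<in> N"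
      using mul_PQ1 ak H_def \<open>a \<in> topspace TG\<close> \<open>k \<in> topspace TG\<close> by simp
  qed
  ultimately show ?thesis using PQ2(1,3) by auto
qed

lemma lie_groupoid_closure_of_composable_near:
  assumes L: "lie_groupoid TG AG TM AM s t u mul iv"
    and g: "g \<in> TG closure_of K" "openin TG P" "g \<in> P"
    and h: "openin TG H" "h \<in> H" "s h = t g"
  obtains k a where "k \<in> K" "k \<in> P" "a \<in> H" "s a = t k"
proof -
  obtain V where V: "openin TM V" "s h \<in> V" "V \<subseteq> s ` H"
    using lie_groupoid_source_locally_open[OF L h(1,2)] by blast
  define T where "T = P \<inter> {a \<in> topspace TG. t a \<in> V}"
  have "g \<in> T" unfolding T_def using g(2,3) V(2) h(3) openin_subset by fastforce
  moreover have "openin TG T" unfolding T_def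
    using g(2) V(1) lie_groupoid_continuous_maps(2)[OF L]
    by (intro openin_Int openin_continuous_map_preimage)
  ultimately obtain k where "k \<in> K" "k \<in> T"
    using g(1) unfolding in_closure_of by blast
  then have k: "k \<in> K" "k \<in> P" "t k \<in> V" unfolding T_def by simp_all
  then have "t k \<in> s ` H" using V(3) by blast
  then obtain a where "a \<in> H" "s a = t k" by (metis imageE)
  then show ?thesis using that k(1,2) by blast
qed

lemma lie_groupoid_closure_of_conj_invariant:
  assumes L: "lie_groupoid TG AG TM AM s t u mul iv"
    and K_isotropy: "K \<subseteq> {k \<in> topspace TG. s k = t k}"
    and K_conj: "\<And>k a. k \<in> K \<Longrightarrow> a \<in> topspace TG \<Longrightarrow> s a = t k \<Longrightarrow> mul a (mul k (iv a)) \<in> K"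
    and g: "g \<in> TG closure_of K" and h: "h \<in> topspace TG" "s h = t g"
  shows "mul h (mul g (iv h)) \<in> TG closure_of K"
proof -
  interpret groupoid_structure "topspace TG" "topspace TM" s t u mul iv
    using L by (rule lie_groupoid_imp_groupoid_structure)
  have g_isotropy: "g \<in> topspace TG" "s g = t g"
    using closure_of_minimal[OF K_isotropy lie_groupoid_closedin_isotropy_bundle[OF L]] g by blast+
  show ?thesis unfolding in_closure_of
  proof (intro conjI allI impI)
    show "mul h (mul g (iv h)) \<in> topspace TG" using h g_isotropy by simp
  next
    fix N assume "mul h (mul g (iv h)) \<in> N \<and> openin TG N"
    then have N: "openin TG N" "mul h (mul g (iv h)) \<in> N" by simp_all
    obtain H P where H: "openin TG H" "h \<in> H" and P: "openin TG P" "g \<in> P"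
      and conj_HP: "\<forall>a\<in>H. \<forall>k\<in>P. s a = t k \<longrightarrow> s k = t k \<longrightarrow> mul a (mul k (iv a)) \<in> N"
      using lie_groupoid_conj_continuous_at[OF L h(1) g_isotropy(1) h(2) g_isotropy(2) N] by blast
    obtain k a where k: "k \<in> K" "k \<in> P" and a: "a \<in> H" "s a = t k"
      using lie_groupoid_closure_of_composable_near[OF L g P H h(2)] by blast
    have "a \<in> topspace TG" using a(1) H(1) openin_subset by blast
    have "s k = t k" using K_isotropy k(1) by blast
    have "mul a (mul k (iv a)) \<in> K"
      using K_conj[OF k(1) \<open>a \<in> topspace TG\<close> a(2)] .
    moreover have "mul a (mul k (iv a)) \<in> N"
      using conj_HP[rule_format, OF a(1) k(2) a(2) \<open>s k = t k\<close>] .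
    ultimately show "\<exists>y. y \<in> K \<and> y \<in> N" by blast
  qed
qed

theorem mainTheorem12:
  fixes TG :: "'g topology" and AG :: "('g, 'e::euclidean_space) atlas"
    and TM :: "'m topology" and AM :: "('m, 'f::euclidean_space) atlas"
    and s t :: "'g \<Rightarrow> 'm" and u :: "'m \<Rightarrow> 'g"
    and mul :: "'g \<Rightarrow> 'g \<Rightarrow> 'g" and iv :: "'g \<Rightarrow> 'g"
  defines "C \<equiv> TG closure_of (\<Union>x\<in>topspace TM. commutator_subgroup (topspace TG) s t u mul iv x)"
  assumes "lie_groupoid TG AG TM AM s t u mul iv"
    and "subgroupoid (topspace TG) s t mul iv C"
  shows "\<forall>g\<in>C. \<forall>h\<in>topspace TG. s h = t g \<longrightarrow> mul h (mul g (iv h)) \<in> C"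
proof (intro ballI impI)
  interpret groupoid_structure "topspace TG" "topspace TM" s t u mul iv
    using assms(2) by (rule lie_groupoid_imp_groupoid_structure)
  fix g h assume "g \<in> C" and h: "h \<in> topspace TG" "s h = t g"
  have "g \<in> TG closure_of (\<Union>x\<in>topspace TM. commutator_subgroup (topspace TG) s t u mul iv x)"
    using \<open>g \<in> C\<close> unfolding C_def .
  from lie_groupoid_closure_of_conj_invariant[OF assms(2)
      Union_commutator_subgroup_subset_isotropy_bundle conj_mem_Union_commutator_subgroup this h]
  show "mul h (mul g (iv h)) \<in> C" unfolding C_def .
qed

end
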